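(* Let $(\Lambda_i,W_i,\mathscr{M}_i)$, $i=1,2$, be flag order data over a field $\mathbb{K}$, let $\Lambda=\Lambda_1\otimes_{\mathbb{K}}\Lambda_2$ and $\hat W=(W_1\times W_2)\ltimes(\mathscr{M}_1\times\mathscr{M}_2)=\hat W_1\times\hat W_2$ acting factorwise on $\Lambda$. For pairwise distinct $\sigma_1,\dots,\sigma_n\in\hat W$, there exist $a_1,\dots,a_n\in\Lambda$ with $\det\big((\sigma_i(a_j))_{i,j=1}^n\big)\neq0$ such that each $a_j$ is a simple tensor $a_j=b_j\otimes c_j$ with $b_j\in\Lambda_1$, $c_j\in\Lambda_2$.
   Context: Flag order data $(\Lambda,W,\mathscr{M})$: $\Lambda$ a Noetherian integrally closed domain, $W$ a finite subgroup of $\mathrm{Aut}(\Lambda)$, $\mathscr{M}$ a submonoid of $\mathrm{Aut}(\Lambda)$ with $(\mathscr{M}\mathscr{M}^{-1})\cap W=\{1\}$ and $W$ normalizing $\mathscr{M}$; $\hat W_i=W_i\ltimes\mathscr{M}_i$. $\Lambda_1\otimes\Lambda_2$ is assumed to be an integral domain, and $(w_1,w_2)(a\otimes b)=w_1(a)\otimes w_2(b)$. *)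

theory Defs
  imports "HOL-Computational_Algebra.Fraction_Field" "HOL-Computational_Algebra.Polynomial"
          "Jordan_Normal_Form.Determinant"
begin

definition is_ideal :: "'a::comm_ring_1 set \<Rightarrow> bool" where
  "is_ideal I \<longleftrightarrow> 0 \<in> I \<and> (\<forall>x\<in>I. \<forall>y\<in>I. x + y \<in> I) \<and> (\<forall>r x. x \<in> I \<longrightarrow> r * x \<in> I)"

definition noetherian_ring :: "'a::comm_ring_1 itself \<Rightarrow> bool" where
  "noetherian_ring _ \<longleftrightarrow> (\<forall>I::'a set. is_ideal I \<longrightarrow>
      (\<exists>F. finite F \<and> I = {\<Sum>f\<in>F. r f * f | r. True}))"

definition integrally_closed :: "'a::idom itself \<Rightarrow> bool" where
  "integrally_closed _ \<longleftrightarrow> (\<forall>x::'a fract.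
      (\<exists>p::'a poly. lead_coeff p = 1 \<and> poly (map_poly (\<lambda>a. Fract a 1) p) x = 0)
      \<longrightarrow> (\<exists>a. x = Fract a 1))"

definition k_algebra :: "('k::field \<Rightarrow> 'a::comm_ring_1 \<Rightarrow> 'a) \<Rightarrow> bool" where
  "k_algebra sc \<longleftrightarrow> vector_space sc \<and> (\<forall>k x y. sc k (x * y) = sc k x * y)"

definition k_aut :: "('k::field \<Rightarrow> 'a::comm_ring_1 \<Rightarrow> 'a) \<Rightarrow> ('a \<Rightarrow> 'a) \<Rightarrow> bool" where
  "k_aut sc f \<longleftrightarrow> bij f \<and> (\<forall>x y. f (x + y) = f x + f y) \<and> (\<forall>x y. f (x * y) = f x * f y)
      \<and> f 1 = 1 \<and> (\<forall>k x. f (sc k x) = sc k (f x))"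

(* flag order data (Lambda, W, M) over K; Lambda is the whole type 'a *)
definition flag_order_data ::
  "('k::field \<Rightarrow> 'a::idom \<Rightarrow> 'a) \<Rightarrow> ('a \<Rightarrow> 'a) set \<Rightarrow> ('a \<Rightarrow> 'a) set \<Rightarrow> bool" where
  "flag_order_data sc W M \<longleftrightarrow>
     k_algebra sc \<and> noetherian_ring TYPE('a) \<and> integrally_closed TYPE('a) \<and>
     \<comment> \<open>W finite subgroup of Aut\<close>
     finite W \<and> W \<subseteq> Collect (k_aut sc) \<and> id \<in> W \<and>
     (\<forall>f\<in>W. \<forall>g\<in>W. f \<circ> g \<in> W) \<and> (\<forall>f\<in>W. inv_into UNIV f \<in> W) \<and>
     \<comment> \<open>M submonoid of Aut\<close>
     M \<subseteq> Collect (k_aut sc) \<and> id \<in> M \<and> (\<forall>f\<in>M. \<forall>g\<in>M. f \<circ> g \<in> M) \<and>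
     \<comment> \<open>(M M^-1) \<inter> W = {1}\<close>
     {m \<circ> inv_into UNIV m' | m m'. m \<in> M \<and> m' \<in> M} \<inter> W = {id} \<and>
     \<comment> \<open>W normalizes M\<close>
     (\<forall>w\<in>W. {w \<circ> m \<circ> inv_into UNIV w | m. m \<in> M} = M)"

(* Lambda = Lambda1 \<otimes>_K Lambda2 realised by a K-bilinear multiplicative map t:
   spanning, and sending products of linearly independent sets injectively
   onto linearly independent sets (characterisation of the tensor product
   of vector spaces), with the algebra structure (a\<otimes>b)(a'\<otimes>b') = aa'\<otimes>bb'. *)
definition tensor_product_algebra ::
  "('k::field \<Rightarrow> 'a::comm_ring_1 \<Rightarrow> 'a) \<Rightarrow> ('k \<Rightarrow> 'b::comm_ring_1 \<Rightarrow> 'b) \<Rightarrow>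
   ('k \<Rightarrow> 'c::comm_ring_1 \<Rightarrow> 'c) \<Rightarrow> ('a \<Rightarrow> 'b \<Rightarrow> 'c) \<Rightarrow> bool" where
  "tensor_product_algebra s1 s2 s t \<longleftrightarrow>
     k_algebra s \<and>
     (\<forall>x x' y. t (x + x') y = t x y + t x' y) \<and>
     (\<forall>x y y'. t x (y + y') = t x y + t x y') \<and>
     (\<forall>k x y. t (s1 k x) y = s k (t x y)) \<and>
     (\<forall>k x y. t x (s2 k y) = s k (t x y)) \<and>
     module.span s (range (case_prod t)) = UNIV \<and>
     (\<forall>B1 B2. \<not> module.dependent s1 B1 \<longrightarrow> \<not> module.dependent s2 B2 \<longrightarrow>
        inj_on (case_prod t) (B1 \<times> B2) \<and> \<not> module.dependent s (case_prod t ` (B1 \<times> B2))) \<and>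
     (\<forall>x x' y y'. t (x * x') (y * y') = t x y * t x' y') \<and>
     t 1 1 = 1"

end

(*
  For \<sigma> = ((w\<^sub>1, m\<^sub>1), (w\<^sub>2, m\<^sub>2)) the map (x, y) \<mapsto> t (w\<^sub>1 (m\<^sub>1 x)) (w\<^sub>2 (m\<^sub>2 y)) is a
  character of the multiplicative monoid \<Lambda>\<^sub>1 \<times> \<Lambda>\<^sub>2 with values in the domain \<Lambda>.
  Distinct \<sigma> give distinct characters: evaluating at (x, 1) and (1, y) recovers
  w\<^sub>1 \<circ> m\<^sub>1 and w\<^sub>2 \<circ> m\<^sub>2, because t is injective in each argument (it does not kill
  nonzero simple tensors), and w \<circ> m determines (w, m) because M M\<^sup>-\<^sup>1 \<inter> W = {1}.
  Dedekind's independence of characters, in its determinant form, then yields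
  points a\<^sub>j = (b\<^sub>j, c\<^sub>j) of \<Lambda>\<^sub>1 \<times> \<Lambda>\<^sub>2 with det (\<sigma>\<^sub>i(b\<^sub>j \<otimes> c\<^sub>j)) \<noteq> 0.
*)
theory Submission
  imports Defs
begin

lemma det_nonzero_imp_rows_independent:
  fixes A :: "'c::idom mat"
  assumes A: "A \<in> carrier_mat n n" and det: "det A \<noteq> 0"
    and rel: "\<And>j. j < n \<Longrightarrow> (\<Sum>i<n. e i * A $$ (i, j)) = 0"
    and i: "i < n"
  shows "e i = 0"
proof -
  have At: "transpose_mat A \<in> carrier_mat n n" using A by simp
  have "transpose_mat A *\<^sub>v vec n e = 0\<^sub>v n"
    using A rel by (intro eq_vecI) (auto simp: scalar_prod_def mult.commute lessThan_atLeast0)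
  with det det_0_iff_vec_prod_zero[OF At] have "vec n e = 0\<^sub>v n"
    using det_transpose[OF A] vec_carrier by metis
  then have "vec n e $ i = 0\<^sub>v n $ i" by simp
  with i show ?thesis by simp
qed

lemma singular_column_extension_imp_relation:
  fixes \<chi> :: "nat \<Rightarrow> 'g \<Rightarrow> 'c::comm_ring_1"
  assumes D: "det (mat n n (\<lambda>(i, j). \<chi> i (a j))) \<noteq> 0"
    and Z: "\<And>x. det (mat (Suc n) (Suc n) (\<lambda>(i, j). \<chi> i (if j < n then a j else x))) = 0"
  obtains C where "C n \<noteq> 0" and "\<And>x. (\<Sum>i<Suc n. C i * \<chi> i x) = 0"
proof -
  define A where "A x = mat (Suc n) (Suc n) (\<lambda>(i, j). \<chi> i (if j < n then a j else x))" for x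
  define C where "C i = cofactor (A undefined) i n" for i
  have minor: "mat_delete (A x) i n = mat_delete (A undefined) i n" for x i
    unfolding A_def mat_delete_def by (rule eq_matI) auto
  have "mat_delete (A undefined) n n = mat n n (\<lambda>(i, j). \<chi> i (a j))"
    unfolding A_def mat_delete_def by (rule eq_matI) auto
  then have "C n \<noteq> 0"
    using D by (simp add: C_def cofactor_def power_add[symmetric] mult_2[symmetric])
  moreover have "(\<Sum>i<Suc n. C i * \<chi> i x) = 0" for x
  proof -
    have entry: "A x $$ (i, n) = \<chi> i x" if "i < Suc n" for i
      using that by (simp add: A_def)
    have "0 = det (A x)" using Z by (simp add: A_def)
    also have "\<dots> = (\<Sum>i<Suc n. A x $$ (i, n) * cofactor (A x) i n)"
      by (rule laplace_expansion_column) (auto simp: A_def)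
    also have "\<dots> = (\<Sum>i<Suc n. C i * \<chi> i x)"
      by (rule sum.cong) (auto simp: entry C_def cofactor_def minor[of x] mult.commute)
    finally show ?thesis by simp
  qed
  ultimately show thesis by (rule that)
qed

text \<open>If the matrix cannot be extended by a new column, the cofactors along
  that column give a relation \<open>\<Sum> C\<^sub>i \<chi>\<^sub>i = 0\<close>; replacing \<open>x\<close> by \<open>y x\<close> and subtracting
  \<open>\<chi>\<^sub>n(y)\<close> times the relation gives a shorter one, which must be trivial.\<close>

lemma det_characters_nonzero:
  fixes \<chi> :: "nat \<Rightarrow> 'g \<Rightarrow> 'c::idom" and mul :: "'g \<Rightarrow> 'g \<Rightarrow> 'g"
  assumes "\<And>i x y. i < n \<Longrightarrow> \<chi> i (mul x y) = \<chi> i x * \<chi> i y"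
    and "\<And>i. i < n \<Longrightarrow> \<chi> i e = 1"
    and "inj_on \<chi> {..<n}"
  shows "\<exists>a. det (mat n n (\<lambda>(i, j). \<chi> i (a j))) \<noteq> 0"
  using assms
proof (induction n)
  case 0
  then show ?case by (simp add: det_def)
next
  case (Suc n)
  note hom = Suc.prems(1) and unit = Suc.prems(2) and inj = Suc.prems(3)
  have "inj_on \<chi> {..<n}" using inj by (rule inj_on_subset) auto
  with Suc.IH hom unit obtain a where D: "det (mat n n (\<lambda>(i, j). \<chi> i (a j))) \<noteq> 0"
    by force
  show ?case
  proof (rule ccontr)
    assume "\<nexists>a. det (mat (Suc n) (Suc n) (\<lambda>(i, j). \<chi> i (a j))) \<noteq> 0"
    then have singular: "\<forall>b. det (mat (Suc n) (Suc n) (\<lambda>(i, j). \<chi> i (b j))) = 0"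
      by blast
    have Z: "det (mat (Suc n) (Suc n) (\<lambda>(i, j). \<chi> i (if j < n then a j else x))) = 0" for x
      using singular[rule_format, of "\<lambda>j. if j < n then a j else x"] by simp
    obtain C where Cn: "C n \<noteq> 0" and rel: "\<And>x. (\<Sum>i<Suc n. C i * \<chi> i x) = 0"
      using singular_column_extension_imp_relation[of n \<chi> a, OF D Z] by blast
    have shorter: "(\<Sum>i<n. C i * (\<chi> i y - \<chi> n y) * \<chi> i x) = 0" for x y
    proof -
      have "(\<Sum>i<n. C i * (\<chi> i y - \<chi> n y) * \<chi> i x)
          = (\<Sum>i<Suc n. C i * \<chi> i (mul y x)) - \<chi> n y * (\<Sum>i<Suc n. C i * \<chi> i x)"
        by (simp add: hom algebra_simps sum_distrib_left sum_subtractf)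
      then show ?thesis using rel by simp
    qed
    have trivial: "C i * (\<chi> i y - \<chi> n y) = 0" if "i < n" for i y
      by (rule det_nonzero_imp_rows_independent[OF _ D _ that]) (use shorter in auto)
    show False
    proof (cases "\<exists>i<n. C i \<noteq> 0")
      case True
      then obtain i where "i < n" "C i \<noteq> 0" by blast
      with trivial have "\<chi> i = \<chi> n" by (auto intro!: ext)
      with \<open>i < n\<close> inj show False by (auto dest: inj_onD)
    next
      case False
      then have "(\<Sum>i<Suc n. C i * \<chi> i e) = C n" by (simp add: unit)
      with rel Cn show False by simp
    qed
  qed
qed

lemma flag_order_data_k_aut:
  assumes "flag_order_data sc W M" and "w \<in> W" and "m \<in> M"
  shows "k_aut sc (w \<circ> m)"
proof -
  have "k_aut sc w" "k_aut sc m"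
    using assms unfolding flag_order_data_def by auto
  then show ?thesis unfolding k_aut_def by (auto simp: bij_comp)
qed

lemma flag_order_data_comp_inject:
  assumes F: "flag_order_data sc W M" and w: "w \<in> W" "w' \<in> W" and m: "m \<in> M" "m' \<in> M"
    and eq: "w \<circ> m = w' \<circ> m'"
  shows "w = w' \<and> m = m'"
proof -
  have bij: "bij w" "bij w'" "bij m"
    using F w m unfolding flag_order_data_def k_aut_def by auto
  have "inv_into UNIV w' \<circ> w = inv_into UNIV w' \<circ> (w \<circ> m) \<circ> inv_into UNIV m"
    using bij(3) by (simp add: comp_assoc bij_is_surj[THEN surj_iff[THEN iffD1]])
  also have "\<dots> = m' \<circ> inv_into UNIV m"
    using bij(2) by (simp add: eq comp_assoc[symmetric] bij_is_inj)
  finally have "inv_into UNIV w' \<circ> w \<in> {m \<circ> inv_into UNIV m' | m m'. m \<in> M \<and> m' \<in> M} \<inter> W"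
    using F w m unfolding flag_order_data_def by blast
  then have "inv_into UNIV w' \<circ> w = id"
    using F unfolding flag_order_data_def by blast
  then have "w' x = w x" for x
    using fun_cong[of _ _ x] bij_inv_eq_iff[OF bij(2)] by (metis comp_apply id_apply)
  then have "w = w'" by auto
  moreover have "w (m x) = w (m' x)" for x
    using fun_cong[OF eq, of x] \<open>w = w'\<close> by simp
  then have "m = m'"
    using bij(1) by (auto intro: ext dest: bij_is_inj injD)
  ultimately show ?thesis ..
qed

lemma tensor_product_algebra_nonzero:
  assumes T: "tensor_product_algebra s1 s2 s t"
    and "vector_space s1" "vector_space s2" and "x \<noteq> 0" "y \<noteq> 0"
  shows "t x y \<noteq> 0"
proof -
  have "vector_space s" using T unfolding tensor_product_algebra_def k_algebra_def by blast
  moreover have "\<not> module.dependent s1 {x}" "\<not> module.dependent s2 {y}"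
    using assms(2-5) vector_space.dependent_single by auto
  ultimately show ?thesis
    using T vector_space.dependent_single unfolding tensor_product_algebra_def by fastforce
qed

lemma tensor_product_algebra_diff:
  assumes T: "tensor_product_algebra s1 s2 s t"
  shows "t (x - x') y = t x y - t x' y" and "t x (y - y') = t x y - t x y'"
proof -
  have "t x y = t (x - x') y + t x' y" "t x y = t x (y - y') + t x y'"
    using T unfolding tensor_product_algebra_def by (metis diff_add_cancel)+
  then show "t (x - x') y = t x y - t x' y" and "t x (y - y') = t x y - t x y'"
    by (simp_all add: eq_diff_eq)
qed

lemma tensor_product_algebra_cancel:
  assumes T: "tensor_product_algebra s1 s2 s t" and "vector_space s1" "vector_space s2"
  shows "t x y = t x' y \<Longrightarrow> y \<noteq> 0 \<Longrightarrow> x = x'"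
    and "t x y = t x y' \<Longrightarrow> x \<noteq> 0 \<Longrightarrow> y = y'"
  using tensor_product_algebra_nonzero[OF assms] tensor_product_algebra_diff[OF T]
  by (metis eq_iff_diff_eq_0)+

definition tensor_character :: "('a \<Rightarrow> 'b \<Rightarrow> 'c) \<Rightarrow> ('a \<Rightarrow> 'a) \<Rightarrow> ('b \<Rightarrow> 'b) \<Rightarrow> 'a \<times> 'b \<Rightarrow> 'c" where
  "tensor_character t f g p = t (f (fst p)) (g (snd p))"

lemma tensor_character_mult:
  assumes "tensor_product_algebra s1 s2 s t" and "k_aut s1 f" and "k_aut s2 g"
  shows "tensor_character t f g (fst p * fst q, snd p * snd q)
      = tensor_character t f g p * tensor_character t f g q"
    and "tensor_character t f g (1, 1) = 1"
  using assms unfolding tensor_product_algebra_def k_aut_def tensor_character_def by auto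

lemma tensor_character_inject:
  fixes s1 :: "'k::field \<Rightarrow> 'a::idom \<Rightarrow> 'a" and s2 :: "'k \<Rightarrow> 'b::idom \<Rightarrow> 'b"
  assumes T: "tensor_product_algebra s1 s2 s t" and V: "vector_space s1" "vector_space s2"
    and aut: "k_aut s1 f" "k_aut s1 f'" "k_aut s2 g" "k_aut s2 g'"
    and eq: "tensor_character t f g = tensor_character t f' g'"
  shows "f = f' \<and> g = g'"
proof
  have one: "f 1 = 1" "f' 1 = 1" "g 1 = 1" "g' 1 = 1"
    using aut unfolding k_aut_def by auto
  show "f = f'"
  proof
    fix x
    have "t (f x) 1 = t (f' x) 1"
      using fun_cong[OF eq, of "(x, 1)"] one by (simp add: tensor_character_def)
    then show "f x = f' x" by (rule tensor_product_algebra_cancel(1)[OF T V]) simp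
  qed
  show "g = g'"
  proof
    fix y
    have "t 1 (g y) = t 1 (g' y)"
      using fun_cong[OF eq, of "(1, y)"] one by (simp add: tensor_character_def)
    then show "g y = g' y" by (rule tensor_product_algebra_cancel(2)[OF T V]) simp
  qed
qed

lemma inj_on_flag_tensor_character:
  assumes F1: "flag_order_data s1 W1 M1" and F2: "flag_order_data s2 W2 M2"
    and T: "tensor_product_algebra s1 s2 s t"
  shows "inj_on (\<lambda>((w1, m1), (w2, m2)). tensor_character t (w1 \<circ> m1) (w2 \<circ> m2))
           ((W1 \<times> M1) \<times> (W2 \<times> M2))"
proof (rule inj_onI, clarsimp)
  fix w1 m1 w2 m2 w1' m1' w2' m2'
  assume mem: "w1 \<in> W1" "m1 \<in> M1" "w2 \<in> W2" "m2 \<in> M2"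
    "w1' \<in> W1" "m1' \<in> M1" "w2' \<in> W2" "m2' \<in> M2"
    and eq: "tensor_character t (w1 \<circ> m1) (w2 \<circ> m2) = tensor_character t (w1' \<circ> m1') (w2' \<circ> m2')"
  have V: "vector_space s1" "vector_space s2"
    using F1 F2 unfolding flag_order_data_def k_algebra_def by auto
  from tensor_character_inject[OF T V _ _ _ _ eq]
  have "w1 \<circ> m1 = w1' \<circ> m1'" "w2 \<circ> m2 = w2' \<circ> m2'"
    using mem flag_order_data_k_aut[OF F1] flag_order_data_k_aut[OF F2] by auto
  then show "w1 = w1' \<and> m1 = m1' \<and> w2 = w2' \<and> m2 = m2'"
    using mem flag_order_data_comp_inject[OF F1] flag_order_data_comp_inject[OF F2] by blast
qed

theorem mainTheorem6:
  fixes s1 :: "'k::field \<Rightarrow> 'a::idom \<Rightarrow> 'a"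
    and s2 :: "'k \<Rightarrow> 'b::idom \<Rightarrow> 'b"
    and s :: "'k \<Rightarrow> 'c::idom \<Rightarrow> 'c"
    and t :: "'a \<Rightarrow> 'b \<Rightarrow> 'c"
    and W1 M1 :: "('a \<Rightarrow> 'a) set" and W2 M2 :: "('b \<Rightarrow> 'b) set"
    and \<sigma> :: "nat \<Rightarrow> (('a \<Rightarrow> 'a) \<times> ('a \<Rightarrow> 'a)) \<times> (('b \<Rightarrow> 'b) \<times> ('b \<Rightarrow> 'b))"
    and n :: nat
  assumes "flag_order_data s1 W1 M1"
    and "flag_order_data s2 W2 M2"
    and "tensor_product_algebra s1 s2 s t"
    and "\<forall>i<n. \<sigma> i \<in> (W1 \<times> M1) \<times> (W2 \<times> M2)"
    and "inj_on \<sigma> {..<n}"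
  shows "\<exists>b :: nat \<Rightarrow> 'a. \<exists>c :: nat \<Rightarrow> 'b.
           det (mat n n (\<lambda>(i, j).
              t ((fst (fst (\<sigma> i)) \<circ> snd (fst (\<sigma> i))) (b j))
                ((fst (snd (\<sigma> i)) \<circ> snd (snd (\<sigma> i))) (c j)))) \<noteq> 0"
proof -
  note F1 = assms(1) and F2 = assms(2) and T = assms(3)
  define \<chi> where
    "\<chi> i = (\<lambda>((w1, m1), (w2, m2)). tensor_character t (w1 \<circ> m1) (w2 \<circ> m2)) (\<sigma> i)" for i
  have \<chi>: "\<chi> i = tensor_character t (fst (fst (\<sigma> i)) \<circ> snd (fst (\<sigma> i)))
                  (fst (snd (\<sigma> i)) \<circ> snd (snd (\<sigma> i)))" for i
    by (simp add: \<chi>_def split_beta)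
  have aut: "k_aut s1 (fst (fst (\<sigma> i)) \<circ> snd (fst (\<sigma> i)))"
    "k_aut s2 (fst (snd (\<sigma> i)) \<circ> snd (snd (\<sigma> i)))" if "i < n" for i
    using assms(4) that flag_order_data_k_aut[OF F1] flag_order_data_k_aut[OF F2] by auto
  have "inj_on \<chi> {..<n}"
  proof (rule inj_onI)
    fix i k assume "i \<in> {..<n}" "k \<in> {..<n}" "\<chi> i = \<chi> k"
    then have "\<sigma> i = \<sigma> k"
      using inj_onD[OF inj_on_flag_tensor_character[OF F1 F2 T]] assms(4) by (auto simp: \<chi>_def)
    with \<open>i \<in> {..<n}\<close> \<open>k \<in> {..<n}\<close> assms(5) show "i = k" by (auto dest: inj_onD)
  qed
  then obtain a where "det (mat n n (\<lambda>(i, j). \<chi> i (a j))) \<noteq> 0"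
    using det_characters_nonzero[of n \<chi> "\<lambda>p q. (fst p * fst q, snd p * snd q)" "(1, 1)"]
      tensor_character_mult[OF T aut] by (auto simp: \<chi>)
  then show ?thesis
    by (intro exI[of _ "fst \<circ> a"] exI[of _ "snd \<circ> a"]) (simp add: \<chi> tensor_character_def)
qed

end
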